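(* Consider the algorithm $\rho$-GRAD (with step-size parameter $\rho\ge1$): set $k=0$, $C=\emptyset$, $\overline{T}^0=T\setminus T'$; repeat: let $\mathbf{z}^k$ be an optimal solution of ODMTS-DFD$(\overline{T}^k)$; let ${T'}^k_{adp}$ be the set of trips $r\in T'\setminus C$ that adopt $\mathbf{z}^k$, and for each such $r$ let $\upsilon^r$ be the cost of its route under $\mathbf{z}^k$ minus the fixed price $\phi$; if ${T'}^k_{adp}=\emptyset$, stop and return $\mathbf{z}^k$; otherwise add to $C$ the (at most) $\rho$ trips of ${T'}^k_{adp}$ with the smallest $\upsilon^r$, set $\overline{T}^{k+1}=(T\setminus T')\cup C$ and $k\leftarrow k+1$. Then the last design $\mathbf{z}^k$ found by the algorithm, with trip set $\hat T=\overline{T}^k$, satisfies the correct rejection property: every latent trip in $T'\setminus\hat T$ rejects $\mathbf{z}^k$.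
   Context: Let $N$ be a finite set of nodes and $H \subseteq N$ a set of hubs. An ODMTS design is a vector $\mathbf{z}=(z_{hl})_{h,l\in H}\in\{0,1\}^{H\times H}$ satisfying $\sum_{l\in H} z_{hl}=\sum_{l\in H} z_{lh}$ for all $h\in H$; opening arc $(h,l)$ costs $\beta_{hl}$. Let $T$ be a finite set of trips; trip $r$ has origin $or^r\in N$, destination $de^r\in N$, number of riders $p^r\ge 0$, and cost coefficients $\tau^r_{hl}$ ($h,l\in H$) and $\gamma^r_{ij}$ ($i,j\in N$); $t_{hl}, t^{wait}_{hl}$ are bus travel and waiting times and $t_{ij}$ shuttle travel times. Given a design $\mathbf{z}$, a route for $r$ is a pair of binary vectors $x^r\in\{0,1\}^{H\times H}$, $y^r\in\{0,1\}^{N\times N}$ with $x^r_{hl}\le z_{hl}$ and, for every $i\in N$, $\sum_{h\in H}(x^r_{ih}-x^r_{hi})\,[\text{if } i\in H] + \sum_{j\in N}(y^r_{ij}-y^r_{ji})$ equal to $1$ if $i=or^r$, $-1$ if $i=de^r$, and $0$ otherwise. Its cost is $g^r=\sum_{h,l}\tau^r_{hl}x^r_{hl}+\sum_{i,j}\gamma^r_{ij}y^r_{ij}$ and its travel time is $f^r=\sum_{h,l}(t_{hl}+t^{wait}_{hl})x^r_{hl}+\sum_{i,j}t_{ij}y^r_{ij}$. The route of $r$ under $\mathbf{z}$ is a route minimizing $(g^r,f^r)$ lexicographically; $g^r(\mathbf{z}), f^r(\mathbf{z})$ denote its cost and time. For $\hat T\subseteq T$, ODMTS-DFD$(\hat T)$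 is the problem of minimizing $\sum_{h,l\in H}\beta_{hl}z_{hl}+\sum_{r\in\hat T}p^r g^r(\mathbf{z})$ over designs $\mathbf{z}$. The trip set is partitioned into core trips $T\setminus T'$ and latent trips $T'$. Each latent trip $r$ has a choice function $\mathcal{C}^r:\mathbb{R}\to\{0,1\}$; $r$ adopts $\mathbf{z}$ if $\mathcal{C}^r(f^r(\mathbf{z}))=1$ and rejects it otherwise. A design $\mathbf{z}$ optimal for ODMTS-DFD$(\hat T)$ satisfies the correct rejection property if every trip $r\in T'\setminus\hat T$ rejects $\mathbf{z}$. *)

theory Defs
  imports Complex_Main
begin

text \<open>An ODMTS instance. Nodes have type 'n, trips type 'r.
  Designs and routes are 0/1 vectors, represented as boolean-valued functions.\<close>

record ('n, 'r) odmts =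
  nodes :: "'n set"
  hubs :: "'n set"
  arc_cost :: "'n \<Rightarrow> 'n \<Rightarrow> real"
  trips :: "'r set"
  origin :: "'r \<Rightarrow> 'n"
  destination :: "'r \<Rightarrow> 'n"
  riders :: "'r \<Rightarrow> real"
  bus_cost :: "'r \<Rightarrow> 'n \<Rightarrow> 'n \<Rightarrow> real"
  shuttle_cost :: "'r \<Rightarrow> 'n \<Rightarrow> 'n \<Rightarrow> real"
  bus_time :: "'n \<Rightarrow> 'n \<Rightarrow> real"
  wait_time :: "'n \<Rightarrow> 'n \<Rightarrow> real"
  shuttle_time :: "'n \<Rightarrow> 'n \<Rightarrow> real"

definition well_formed :: "('n, 'r) odmts \<Rightarrow> bool" where
  "well_formed I \<longleftrightarrow> finite (nodes I) \<and> hubs I \<subseteq> nodes I \<and> finite (trips I) \<and>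
     (\<forall>r\<in>trips I. origin I r \<in> nodes I \<and> destination I r \<in> nodes I \<and> riders I r \<ge> 0)"

definition is_design :: "('n, 'r) odmts \<Rightarrow> ('n \<Rightarrow> 'n \<Rightarrow> bool) \<Rightarrow> bool" where
  "is_design I z \<longleftrightarrow>
     (\<forall>h l. z h l \<longrightarrow> h \<in> hubs I \<and> l \<in> hubs I) \<and>
     (\<forall>h\<in>hubs I. (\<Sum>l\<in>hubs I. of_bool (z h l) :: real) = (\<Sum>l\<in>hubs I. of_bool (z l h)))"

definition is_route :: "('n, 'r) odmts \<Rightarrow> ('n \<Rightarrow> 'n \<Rightarrow> bool) \<Rightarrow> 'r \<Rightarrow>
    ('n \<Rightarrow> 'n \<Rightarrow> bool) \<Rightarrow> ('n \<Rightarrow> 'n \<Rightarrow> bool) \<Rightarrow> bool" where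
  "is_route I z r x y \<longleftrightarrow>
     (\<forall>h l. x h l \<longrightarrow> h \<in> hubs I \<and> l \<in> hubs I) \<and>
     (\<forall>i j. y i j \<longrightarrow> i \<in> nodes I \<and> j \<in> nodes I) \<and>
     (\<forall>h l. x h l \<longrightarrow> z h l) \<and>
     (\<forall>i\<in>nodes I.
        (if i \<in> hubs I then (\<Sum>h\<in>hubs I. of_bool (x i h) - of_bool (x h i)) else 0)
        + (\<Sum>j\<in>nodes I. of_bool (y i j) - of_bool (y j i))
        = (if i = origin I r then 1 else if i = destination I r then -1 else (0::real)))"

definition route_cost :: "('n, 'r) odmts \<Rightarrow> 'r \<Rightarrow>
    ('n \<Rightarrow> 'n \<Rightarrow> bool) \<Rightarrow> ('n \<Rightarrow> 'n \<Rightarrow> bool) \<Rightarrow> real" where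
  "route_cost I r x y =
     (\<Sum>h\<in>hubs I. \<Sum>l\<in>hubs I. bus_cost I r h l * of_bool (x h l)) +
     (\<Sum>i\<in>nodes I. \<Sum>j\<in>nodes I. shuttle_cost I r i j * of_bool (y i j))"

definition route_time :: "('n, 'r) odmts \<Rightarrow>
    ('n \<Rightarrow> 'n \<Rightarrow> bool) \<Rightarrow> ('n \<Rightarrow> 'n \<Rightarrow> bool) \<Rightarrow> real" where
  "route_time I x y =
     (\<Sum>h\<in>hubs I. \<Sum>l\<in>hubs I. (bus_time I h l + wait_time I h l) * of_bool (x h l)) +
     (\<Sum>i\<in>nodes I. \<Sum>j\<in>nodes I. shuttle_time I i j * of_bool (y i j))"

definition is_lex_opt_route :: "('n, 'r) odmts \<Rightarrow> ('n \<Rightarrow> 'n \<Rightarrow> bool) \<Rightarrow> 'r \<Rightarrow>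
    ('n \<Rightarrow> 'n \<Rightarrow> bool) \<Rightarrow> ('n \<Rightarrow> 'n \<Rightarrow> bool) \<Rightarrow> bool" where
  "is_lex_opt_route I z r x y \<longleftrightarrow> is_route I z r x y \<and>
     (\<forall>x' y'. is_route I z r x' y' \<longrightarrow>
        route_cost I r x y < route_cost I r x' y' \<or>
        (route_cost I r x y = route_cost I r x' y' \<and> route_time I x y \<le> route_time I x' y'))"

definition trip_cost :: "('n, 'r) odmts \<Rightarrow> ('n \<Rightarrow> 'n \<Rightarrow> bool) \<Rightarrow> 'r \<Rightarrow> real" where
  "trip_cost I z r = (THE c. \<exists>x y. is_lex_opt_route I z r x y \<and> c = route_cost I r x y)"

definition trip_time :: "('n, 'r) odmts \<Rightarrow> ('n \<Rightarrow> 'n \<Rightarrow> bool) \<Rightarrow> 'r \<Rightarrow> real" where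
  "trip_time I z r = (THE t. \<exists>x y. is_lex_opt_route I z r x y \<and> t = route_time I x y)"

definition dfd_objective :: "('n, 'r) odmts \<Rightarrow> 'r set \<Rightarrow> ('n \<Rightarrow> 'n \<Rightarrow> bool) \<Rightarrow> real" where
  "dfd_objective I That z =
     (\<Sum>h\<in>hubs I. \<Sum>l\<in>hubs I. arc_cost I h l * of_bool (z h l)) +
     (\<Sum>r\<in>That. riders I r * trip_cost I z r)"

definition dfd_optimal :: "('n, 'r) odmts \<Rightarrow> 'r set \<Rightarrow> ('n \<Rightarrow> 'n \<Rightarrow> bool) \<Rightarrow> bool" where
  "dfd_optimal I That z \<longleftrightarrow> is_design I z \<and>
     (\<forall>z'. is_design I z' \<longrightarrow> dfd_objective I That z \<le> dfd_objective I That z')"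

definition adopts :: "('n, 'r) odmts \<Rightarrow> ('r \<Rightarrow> real \<Rightarrow> bool) \<Rightarrow> 'r \<Rightarrow> ('n \<Rightarrow> 'n \<Rightarrow> bool) \<Rightarrow> bool" where
  "adopts I choice r z \<longleftrightarrow> choice r (trip_time I z r)"

definition correct_rejection :: "('n, 'r) odmts \<Rightarrow> 'r set \<Rightarrow> ('r \<Rightarrow> real \<Rightarrow> bool) \<Rightarrow>
    'r set \<Rightarrow> ('n \<Rightarrow> 'n \<Rightarrow> bool) \<Rightarrow> bool" where
  "correct_rejection I Tl choice That z \<longleftrightarrow>
     (\<forall>r\<in>Tl - That. \<not> adopts I choice r z)"

definition adopting_set :: "('n, 'r) odmts \<Rightarrow> 'r set \<Rightarrow> ('r \<Rightarrow> real \<Rightarrow> bool) \<Rightarrow>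
    'r set \<Rightarrow> ('n \<Rightarrow> 'n \<Rightarrow> bool) \<Rightarrow> 'r set" where
  "adopting_set I Tl choice C z = {r \<in> Tl - C. adopts I choice r z}"

text \<open>A (terminating) execution of rho-GRAD of K+1 iterations (k = 0..K):
  Cs k is the set C at the start of iteration k, zs k the design z^k computed in
  iteration k (any optimal solution), and the algorithm stops at iteration K.\<close>
definition rho_grad_run :: "('n, 'r) odmts \<Rightarrow> 'r set \<Rightarrow> ('r \<Rightarrow> real \<Rightarrow> bool) \<Rightarrow> real \<Rightarrow> nat \<Rightarrow>
    (nat \<Rightarrow> 'r set) \<Rightarrow> (nat \<Rightarrow> ('n \<Rightarrow> 'n \<Rightarrow> bool)) \<Rightarrow> nat \<Rightarrow> bool" where
  "rho_grad_run I Tl choice phi rho Cs zs K \<longleftrightarrow>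
     Cs 0 = {} \<and>
     (\<forall>k\<le>K. dfd_optimal I ((trips I - Tl) \<union> Cs k) (zs k)) \<and>
     (\<forall>k<K. adopting_set I Tl choice (Cs k) (zs k) \<noteq> {} \<and>
        (\<exists>S. S \<subseteq> adopting_set I Tl choice (Cs k) (zs k) \<and>
             card S = min rho (card (adopting_set I Tl choice (Cs k) (zs k))) \<and>
             (\<forall>r\<in>S. \<forall>r'\<in>adopting_set I Tl choice (Cs k) (zs k) - S.
                trip_cost I (zs k) r - phi \<le> trip_cost I (zs k) r' - phi) \<and>
             Cs (Suc k) = Cs k \<union> S)) \<and>
     adopting_set I Tl choice (Cs K) (zs K) = {}"

end

theory Submission
  imports Defs
begin

lemma latent_trips_outside_core_union:
  "Tl - ((T - Tl) \<union> C) = Tl - C"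
  by blast

lemma correct_rejection_iff_adopting_set_empty:
  "correct_rejection I Tl choice ((trips I - Tl) \<union> C) z \<longleftrightarrow>
     adopting_set I Tl choice C z = {}"
  unfolding correct_rejection_def adopting_set_def latent_trips_outside_core_union
  by blast

lemma rho_grad_run_final_adopting_set_empty:
  assumes "rho_grad_run I Tl choice phi rho Cs zs K"
  shows "adopting_set I Tl choice (Cs K) (zs K) = {}"
  using assms unfolding rho_grad_run_def by blast

theorem mainTheorem2:
  fixes I :: "('n, 'r) odmts" and Tl :: "'r set"
    and choice :: "'r \<Rightarrow> real \<Rightarrow> bool" and phi :: real and rho :: nat
    and Cs :: "nat \<Rightarrow> 'r set" and zs :: "nat \<Rightarrow> ('n \<Rightarrow> 'n \<Rightarrow> bool)" and K :: nat
  assumes "well_formed I"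
    and "Tl \<subseteq> trips I"
    and "rho \<ge> 1"
    and "rho_grad_run I Tl choice phi rho Cs zs K"
  shows "correct_rejection I Tl choice ((trips I - Tl) \<union> Cs K) (zs K)"
  using rho_grad_run_final_adopting_set_empty [OF assms(4)]
  by (simp only: correct_rejection_iff_adopting_set_empty)

end
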